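(* Let $W$ be any matrix and $A$ any full rank matrix with the same number of columns as $W$, and let $D$ be a square diagonal matrix (with as many rows as $A$) all of whose diagonal entries are at least $1$. Then $\|W(DA)^+\|_F\le\|WA^+\|_F$.
   Context: $M^+$ denotes the Moore–Penrose pseudo-inverse of $M$ and $\|\cdot\|_F$ the Frobenius norm. *)

theory Defs
  imports "HOL-Analysis.Analysis"
begin

text \<open>Moore--Penrose pseudo-inverse of a real matrix: the unique matrix X satisfying the
  four Penrose conditions (for real matrices the conjugate transpose is the transpose).\<close>
definition pinv :: "real^'n^'m \<Rightarrow> real^'m^'n" where
  "pinv A = (THE X. A ** X ** A = A \<and> X ** A ** X = X \<and>
                    transpose (A ** X) = A ** X \<and> transpose (X ** A) = X ** A)"

definition frob_norm :: "real^'n^'m \<Rightarrow> real" where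
  "frob_norm M = sqrt (\<Sum>i\<in>UNIV. \<Sum>j\<in>UNIV. (M $ i $ j)\<^sup>2)"

definition full_rank :: "real^'n^'m \<Rightarrow> bool" where
  "full_rank A \<longleftrightarrow> rank A = min CARD('m) CARD('n)"

end

theory Submission
  imports Defs
begin

text \<open>Write \<open>E = D\<^sup>-\<^sup>1\<close>, a diagonal matrix with entries in \<open>(0, 1]\<close>; right multiplication by
  \<open>E\<close>, like right multiplication by an orthogonal projection, does not increase the Frobenius
  norm. If \<open>A\<close> has full row rank, then \<open>(DA)\<^sup>+ = A\<^sup>+E\<close>. If \<open>A\<close> has full column rank, then
  \<open>A\<^sup>+A = 1\<close>, hence \<open>(DA)\<^sup>+ = A\<^sup>+E (DA)(DA)\<^sup>+\<close>, and \<open>(DA)(DA)\<^sup>+\<close> is an orthogonal projection.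
  In both cases \<open>\<parallel>W(DA)\<^sup>+\<parallel> \<le> \<parallel>WA\<^sup>+E\<parallel> \<le> \<parallel>WA\<^sup>+\<parallel>\<close>.\<close>

definition penrose :: "real^'n^'m \<Rightarrow> real^'m^'n \<Rightarrow> bool" where
  "penrose A X \<longleftrightarrow> A ** X ** A = A \<and> X ** A ** X = X \<and>
                    transpose (A ** X) = A ** X \<and> transpose (X ** A) = X ** A"

lemma penrose_unique:
  assumes X: "penrose A X" and Y: "penrose A Y"
  shows "Y = X"
proof -
  have x1: "A ** X ** A = A" and x2: "X ** A ** X = X" and x3: "transpose (A ** X) = A ** X"
    and x4: "transpose (X ** A) = X ** A" using X unfolding penrose_def by auto
  have y1: "A ** Y ** A = A" and y2: "Y ** A ** Y = Y" and y3: "transpose (A ** Y) = A ** Y"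
    and y4: "transpose (Y ** A) = Y ** A" using Y unfolding penrose_def by auto
  have "X = X ** transpose (A ** X)" using x2 x3 by (simp add: matrix_mul_assoc)
  also have "\<dots> = X ** transpose (A ** Y ** A ** X)" using y1 by simp
  also have "\<dots> = X ** A ** X ** A ** Y"
    using x3 y3 by (simp add: matrix_transpose_mul matrix_mul_assoc)
  finally have X_eq: "X = X ** A ** Y" using x2 by simp
  have "Y = transpose (Y ** A) ** Y" using y2 y4 by simp
  also have "\<dots> = transpose (Y ** (A ** X ** A)) ** Y" using x1 by (simp add: matrix_mul_assoc)
  also have "\<dots> = X ** A ** (Y ** A ** Y)"
    using x4 y4 by (simp add: matrix_transpose_mul matrix_mul_assoc)
  finally show ?thesis using X_eq y2 by simp
qed

lemma pinv_eqI:
  assumes "penrose A X"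
  shows "pinv A = X"
proof -
  have "(THE X. penrose A X) = X"
    using assms penrose_unique by (intro the_equality) blast+
  then show ?thesis unfolding pinv_def penrose_def by simp
qed

lemma penrose_transpose:
  assumes "penrose A X"
  shows "penrose (transpose A) (transpose X)"
proof -
  have "transpose A ** transpose X ** transpose A = transpose (A ** X ** A)"
    and "transpose X ** transpose A ** transpose X = transpose (X ** A ** X)"
    and "transpose A ** transpose X = transpose (X ** A)"
    and "transpose X ** transpose A = transpose (A ** X)"
    by (simp_all add: matrix_transpose_mul matrix_mul_assoc)
  with assms show ?thesis unfolding penrose_def by simp
qed

lemma gram_matrix_invertible:
  fixes A :: "real^'n^'m"
  assumes "inj ((*v) A)"
  obtains B where "B ** (transpose A ** A) = mat 1" "(transpose A ** A) ** B = mat 1"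
proof -
  have "x = 0" if "(transpose A ** A) *v x = 0" for x
  proof -
    have "(A *v x) \<bullet> (A *v x) = x \<bullet> ((transpose A ** A) *v x)"
      by (metis dot_lmul_matrix matrix_vector_mul_assoc vector_transpose_matrix)
    then have "A *v x = 0" using that by simp
    then show "x = 0" using assms by (metis injD matrix_vector_mult_0_right)
  qed
  then obtain B where "B ** (transpose A ** A) = mat 1"
    using matrix_left_invertible_ker by blast
  then show ?thesis using that matrix_left_right_inverse by blast
qed

lemma inverse_of_symmetric_is_symmetric:
  fixes G B :: "real^'n^'n"
  assumes "transpose G = G" "B ** G = mat 1" "G ** B = mat 1"
  shows "transpose B = B"
proof -
  have "transpose B ** G = mat 1" using assms by (metis matrix_transpose_mul transpose_mat)
  then have "transpose B ** G ** B = B" by simp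
  then show ?thesis using assms(3) by (simp add: matrix_mul_assoc [symmetric])
qed

lemma penrose_pinv_of_inj:
  fixes A :: "real^'n^'m"
  assumes "inj ((*v) A)"
  shows "penrose A (pinv A)" and "pinv A ** A = mat 1"
proof -
  obtain B where B_left: "B ** (transpose A ** A) = mat 1"
    and B_right: "(transpose A ** A) ** B = mat 1"
    using gram_matrix_invertible [OF assms] by blast
  have B_sym: "transpose B = B"
    by (rule inverse_of_symmetric_is_symmetric [OF _ B_left B_right]) (simp add: matrix_transpose_mul)
  define X where "X = B ** transpose A"
  have XA: "X ** A = mat 1" using B_left unfolding X_def by (simp add: matrix_mul_assoc)
  have "penrose A X" unfolding penrose_def
  proof (intro conjI)
    show "A ** X ** A = A" using XA by (simp add: matrix_mul_assoc [symmetric])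
    show "X ** A ** X = X" using XA by simp
    show "transpose (A ** X) = A ** X"
      unfolding X_def using B_sym by (simp add: matrix_transpose_mul matrix_mul_assoc)
    show "transpose (X ** A) = X ** A" using XA by simp
  qed
  with XA show "penrose A (pinv A)" and "pinv A ** A = mat 1" by (simp_all add: pinv_eqI)
qed

lemma penrose_pinv_of_inj_transpose:
  fixes A :: "real^'n^'m"
  assumes "inj ((*v) (transpose A))"
  shows "penrose A (pinv A)" and "A ** pinv A = mat 1"
proof -
  let ?X = "transpose (pinv (transpose A))"
  have "penrose A ?X"
    using penrose_transpose [OF penrose_pinv_of_inj(1) [OF assms]] by simp
  then have pinv_A: "pinv A = ?X" by (rule pinv_eqI)
  with \<open>penrose A ?X\<close> show "penrose A (pinv A)" by simp
  have "A ** ?X = transpose (pinv (transpose A) ** transpose A)"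
    by (simp add: matrix_transpose_mul)
  with pinv_A show "A ** pinv A = mat 1" by (simp add: penrose_pinv_of_inj(2) [OF assms])
qed

lemma pinv_invertible_mult_of_inj_transpose:
  assumes "inj ((*v) (transpose A))" "E ** D = mat 1" "D ** E = mat 1"
  shows "pinv (D ** A) = pinv A ** E"
proof (rule pinv_eqI)
  have A_pinv: "A ** pinv A = mat 1" and pinv_A_sym: "transpose (pinv A ** A) = pinv A ** A"
    and pinv_A_pinv: "pinv A ** A ** pinv A = pinv A"
    using penrose_pinv_of_inj_transpose [OF assms(1)] unfolding penrose_def by auto
  have right_inv: "D ** A ** (pinv A ** E) = mat 1"
    using A_pinv assms(3) by (metis matrix_mul_assoc matrix_mul_rid)
  have left_prod: "pinv A ** E ** (D ** A) = pinv A ** A"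
    using assms(2) by (metis matrix_mul_assoc matrix_mul_lid)
  show "penrose (D ** A) (pinv A ** E)"
    unfolding penrose_def
  proof (intro conjI)
    show "D ** A ** (pinv A ** E) ** (D ** A) = D ** A"
      using right_inv by simp
    show "pinv A ** E ** (D ** A) ** (pinv A ** E) = pinv A ** E"
      using left_prod pinv_A_pinv by (simp add: matrix_mul_assoc)
    show "transpose (D ** A ** (pinv A ** E)) = D ** A ** (pinv A ** E)"
      using right_inv by simp
    show "transpose (pinv A ** E ** (D ** A)) = pinv A ** E ** (D ** A)"
      using left_prod pinv_A_sym by simp
  qed
qed

lemma pinv_invertible_mult_of_inj:
  assumes "inj ((*v) A)" "E ** D = mat 1"
  shows "pinv (D ** A) = pinv A ** E ** (D ** A ** pinv (D ** A))"
proof -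
  have "pinv (D ** A) = pinv A ** A ** pinv (D ** A)"
    using penrose_pinv_of_inj(2) [OF assms(1)] by simp
  also have "\<dots> = pinv A ** (E ** D) ** A ** pinv (D ** A)" using assms(2) by simp
  finally show ?thesis by (simp add: matrix_mul_assoc)
qed

lemma inj_invertible_mult:
  assumes "inj ((*v) A)" "E ** D = mat 1"
  shows "inj ((*v) (D ** A))"
proof (rule injI)
  fix x y
  assume "(D ** A) *v x = (D ** A) *v y"
  then have "(E ** D ** A) *v x = (E ** D ** A) *v y"
    by (metis matrix_mul_assoc matrix_vector_mul_assoc)
  then show "x = y" using assms by (simp add: inj_eq)
qed

lemma penrose_projection:
  assumes "penrose A X"
  shows "transpose (A ** X) = A ** X" and "(A ** X) ** (A ** X) = A ** X"
  using assms unfolding penrose_def by (simp_all add: matrix_mul_assoc)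

lemma frob_norm_rows: "frob_norm M = sqrt (\<Sum>i\<in>UNIV. M $ i \<bullet> M $ i)"
  unfolding frob_norm_def inner_vec_def by (simp add: power2_eq_square)

lemma row_matrix_mult: "(Z ** P) $ i = Z $ i v* P"
  by (simp add: matrix_matrix_mult_def vector_matrix_mult_def vec_eq_iff mult.commute)

lemma inner_vector_mult_projection_le:
  fixes P :: "real^'m^'m" and z :: "real^'m"
  assumes "transpose P = P" "P ** P = P"
  shows "(z v* P) \<bullet> (z v* P) \<le> z \<bullet> z"
proof -
  have z_P: "z v* P = P *v z" using assms(1) by (metis vector_transpose_matrix)
  have "(P *v z) \<bullet> (P *v z) = ((P *v z) v* P) \<bullet> z"
    by (rule dot_lmul_matrix [symmetric])
  also have "\<dots> = (P *v z) \<bullet> z"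
    using assms by (metis vector_transpose_matrix matrix_vector_mul_assoc)
  finally have "(P *v z) \<bullet> (P *v z) = (P *v z) \<bullet> z" .
  moreover have "0 \<le> (z - P *v z) \<bullet> (z - P *v z)" by simp
  ultimately show ?thesis
    using z_P by (simp add: inner_diff_left inner_diff_right inner_commute)
qed

lemma frob_norm_mult_projection_le:
  fixes P :: "real^'m^'m" and Z :: "real^'m^'p"
  assumes "transpose P = P" "P ** P = P"
  shows "frob_norm (Z ** P) \<le> frob_norm Z"
  unfolding frob_norm_rows row_matrix_mult
  by (intro real_sqrt_le_mono sum_mono inner_vector_mult_projection_le assms)

lemma diagonal_matrix_mult_nth:
  fixes D :: "'a::comm_semiring_1^'m^'m"
  assumes "\<And>i j. i \<noteq> j \<Longrightarrow> D $ i $ j = 0"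
  shows "(D ** M) $ i $ j = D $ i $ i * M $ i $ j"
proof -
  have "(\<Sum>k\<in>UNIV. D $ i $ k * M $ k $ j) = (\<Sum>k\<in>UNIV. if k = i then D $ i $ i * M $ i $ j else 0)"
    by (rule sum.cong) (auto simp: assms)
  then show ?thesis by (simp add: matrix_matrix_mult_def)
qed

lemma matrix_mult_diagonal_nth:
  fixes D :: "'a::comm_semiring_1^'m^'m"
  assumes "\<And>i j. i \<noteq> j \<Longrightarrow> D $ i $ j = 0"
  shows "(M ** D) $ i $ j = M $ i $ j * D $ j $ j"
proof -
  have "(\<Sum>k\<in>UNIV. M $ i $ k * D $ k $ j) = (\<Sum>k\<in>UNIV. if k = j then M $ i $ j * D $ j $ j else 0)"
    by (rule sum.cong) (auto simp: assms)
  then show ?thesis by (simp add: matrix_matrix_mult_def)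
qed

lemma frob_norm_mult_diagonal_le:
  fixes E :: "real^'m^'m" and Z :: "real^'m^'p"
  assumes "\<And>i j. i \<noteq> j \<Longrightarrow> E $ i $ j = 0" "\<And>j. \<bar>E $ j $ j\<bar> \<le> 1"
  shows "frob_norm (Z ** E) \<le> frob_norm Z"
proof -
  have "((Z ** E) $ i $ j)\<^sup>2 \<le> (Z $ i $ j)\<^sup>2" for i j
  proof -
    have "(E $ j $ j)\<^sup>2 \<le> 1"
      using assms(2) [of j] by (metis abs_ge_zero power2_abs power_le_one)
    then show ?thesis
      by (simp add: matrix_mult_diagonal_nth assms(1) power_mult_distrib mult_left_le)
  qed
  then show ?thesis
    unfolding frob_norm_def by (intro real_sqrt_le_mono sum_mono)
qed

lemma diagonal_inverse:
  fixes D :: "'a::field^'m^'m"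
  assumes "\<And>i j. i \<noteq> j \<Longrightarrow> D $ i $ j = 0" "\<And>i. D $ i $ i \<noteq> 0"
  defines "E \<equiv> \<chi> i j. if i = j then inverse (D $ i $ i) else 0"
  shows "E ** D = mat 1" and "D ** E = mat 1"
proof -
  have E_diagonal: "\<And>i j. i \<noteq> j \<Longrightarrow> E $ i $ j = 0" unfolding E_def by simp
  show "E ** D = mat 1" "D ** E = mat 1"
    using assms by (auto simp: vec_eq_iff mat_def E_def E_diagonal
        diagonal_matrix_mult_nth matrix_mult_diagonal_nth)
qed

lemma frob_norm_mult_pinv_invertible_mult_le:
  fixes W :: "real^'n^'p" and A :: "real^'n^'m" and D E :: "real^'m^'m"
  assumes "full_rank A" "E ** D = mat 1" "D ** E = mat 1"
  shows "frob_norm (W ** pinv (D ** A)) \<le> frob_norm (W ** pinv A ** E)"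
proof (cases "CARD('n) \<le> CARD('m)")
  case True
  then have inj_A: "inj ((*v) A)"
    using assms(1) full_rank_injective unfolding full_rank_def by fastforce
  note projection = penrose_projection
      [OF penrose_pinv_of_inj(1) [OF inj_invertible_mult [OF inj_A assms(2)]]]
  show ?thesis
    using pinv_invertible_mult_of_inj [OF inj_A assms(2)] frob_norm_mult_projection_le [OF projection]
    by (metis matrix_mul_assoc)
next
  case False
  then have "rank (transpose A) = CARD('m)"
    using assms(1) unfolding full_rank_def by (simp add: rank_transpose)
  then have "inj ((*v) (transpose A))" by (simp add: full_rank_injective)
  then show ?thesis
    by (simp add: pinv_invertible_mult_of_inj_transpose [OF _ assms(2,3)] matrix_mul_assoc)
qed

theorem mainTheorem6:
  fixes W :: "real^'n^'p" and A :: "real^'n^'m" and D :: "real^'m^'m"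
  assumes "full_rank A"
    and "\<And>i j. i \<noteq> j \<Longrightarrow> D $ i $ j = 0"
    and "\<And>i. D $ i $ i \<ge> 1"
  shows "frob_norm (W ** pinv (D ** A)) \<le> frob_norm (W ** pinv A)"
proof -
  define E :: "real^'m^'m" where "E = (\<chi> i j. if i = j then inverse (D $ i $ i) else 0)"
  have E_diagonal: "\<And>i j. i \<noteq> j \<Longrightarrow> E $ i $ j = 0" unfolding E_def by simp
  have E_contracts: "\<bar>E $ j $ j\<bar> \<le> 1" for j
    using assms(3) [of j] unfolding E_def by (simp add: inverse_le_1_iff)
  have D_nonzero: "D $ i $ i \<noteq> 0" for i
    using assms(3) [of i] by simp
  have ED: "E ** D = mat 1"
    unfolding E_def by (rule diagonal_inverse(1)) (simp_all add: assms(2) D_nonzero)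
  have DE: "D ** E = mat 1"
    unfolding E_def by (rule diagonal_inverse(2)) (simp_all add: assms(2) D_nonzero)
  have "frob_norm (W ** pinv (D ** A)) \<le> frob_norm (W ** pinv A ** E)"
    using frob_norm_mult_pinv_invertible_mult_le [OF assms(1) ED DE] .
  also have "\<dots> \<le> frob_norm (W ** pinv A)"
    by (rule frob_norm_mult_diagonal_le [OF E_diagonal E_contracts])
  finally show ?thesis .
qed

end
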